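(* Let $(M,d)$ be a homogeneous compact ultrametric space with no isolated points. (a) For every $r>0$, the optimal code of size $|\Pi(r)|$ in $(M,d)$ is unique up to isometry. (b) The symmetry strength of $(M,d)$ is infinite.
   Context: An ultrametric space satisfies $d(x,z)\leq\max(d(x,y),d(y,z))$. For $r>0$, $\Pi(r)$ is the (finite) partition of $M$ into open balls of radius $r$. Subsets $A,B\subseteq M$ are isometric if there is a bijection $f\colon A\to B$ with $d(f(x),f(y))=d(x,y)$; $M$ is homogeneous if every isometry between finite subsets extends to an isometry of $M$ onto itself. $x$ is isolated if some ball around $x$ contains only $x$. An optimal code of size $n$ is an $n$-element subset maximizing the minimum distance between distinct points; unique up to isometry means any two are related by an isometry of $M$. The symmetry strength of $M$ with isometry group $G$ is the supremum of $t$ such that for every size-$t$ subset $T\subseteq M$ there is $g\in G\setminus\{\mathrm{id}\}$ with $gT=T$. *)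

theory Defs
  imports "HOL-Analysis.Analysis"
begin

text \<open>The whole metric space M is the type 'a (class metric_space), with distance dist.\<close>

definition ultrametric :: "('a::metric_space) itself \<Rightarrow> bool" where
  "ultrametric _ \<longleftrightarrow> (\<forall>x y z::'a. dist x z \<le> max (dist x y) (dist y z))"

definition isometry_of_space :: "('a::metric_space \<Rightarrow> 'a) \<Rightarrow> bool" where
  "isometry_of_space g \<longleftrightarrow> bij g \<and> (\<forall>x y. dist (g x) (g y) = dist x y)"

definition homogeneous :: "('a::metric_space) itself \<Rightarrow> bool" where
  "homogeneous _ \<longleftrightarrow>
     (\<forall>(A::'a set) B f. finite A \<and> finite B \<and> bij_betw f A B \<and>
        (\<forall>x\<in>A. \<forall>y\<in>A. dist (f x) (f y) = dist x y) \<longrightarrow>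
        (\<exists>g. isometry_of_space g \<and> (\<forall>x\<in>A. g x = f x)))"

definition isolated_point :: "'a::metric_space \<Rightarrow> bool" where
  "isolated_point x \<longleftrightarrow> (\<exists>e>0. ball x e = {x})"

definition ball_partition :: "real \<Rightarrow> ('a::metric_space) set set" where
  "ball_partition r = {ball x r | x. True}"

definition min_dist :: "('a::metric_space) set \<Rightarrow> real" where
  "min_dist C = Min {dist x y | x y. x \<in> C \<and> y \<in> C \<and> x \<noteq> y}"

definition is_optimal_code :: "nat \<Rightarrow> ('a::metric_space) set \<Rightarrow> bool" where
  "is_optimal_code n C \<longleftrightarrow> finite C \<and> card C = n \<and>
     (\<forall>C'::'a set. finite C' \<and> card C' = n \<longrightarrow> min_dist C' \<le> min_dist C)"

definition sym_admissible :: "('a::metric_space) itself \<Rightarrow> nat \<Rightarrow> bool" where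
  "sym_admissible _ t \<longleftrightarrow>
     (\<forall>T::'a set. finite T \<and> card T = t \<longrightarrow>
        (\<exists>g. isometry_of_space g \<and> g \<noteq> id \<and> g ` T = T))"

text \<open>Symmetry strength infinite: the set of admissible t has supremum infinity,
  i.e. is unbounded.\<close>
definition infinite_symmetry_strength :: "('a::metric_space) itself \<Rightarrow> bool" where
  "infinite_symmetry_strength X \<longleftrightarrow> \<not> bdd_above {t. sym_admissible X t}"

end

theory Submission
  imports Defs
begin

text \<open>In an ultrametric space the open balls of radius \<open>r\<close> partition the space, two of them
  coinciding exactly when their centres are closer than \<open>r\<close>. A code with \<open>|\<Pi>(r)|\<close> points
  therefore either meets every ball once, and then all its distances are at least \<open>r\<close>, or it has
  two points in one ball, and then its minimum distance is below \<open>r\<close>; so the optimal codes are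
  exactly the transversals of \<open>\<Pi>(r)\<close>. Matching the points of two transversals that lie in the same
  ball preserves all distances, since every triangle is isosceles, and homogeneity extends this
  matching to an isometry of the whole space.

  For (b), given a finite set \<open>T\<close> and any point \<open>x\<close>, choose \<open>y \<noteq> x\<close> closer to \<open>x\<close> than every
  point of \<open>T - {x}\<close>, and \<open>z \<noteq> y\<close> closer to \<open>y\<close> than \<open>x\<close> is. Then every point of \<open>T\<close> is equidistant from \<open>y\<close> and \<open>z\<close>,
  so exchanging \<open>y\<close> and \<open>z\<close> while fixing \<open>T\<close> is a partial isometry; its extension is a
  non-identity isometry mapping \<open>T\<close> onto itself.\<close>

lemma ultrametric_dist_le_max:
  assumes "ultrametric TYPE('a::metric_space)"
  shows "dist (x::'a) z \<le> max (dist x y) (dist y z)"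
  using assms by (simp add: ultrametric_def)

lemma ultrametric_isosceles:
  assumes "ultrametric TYPE('a::metric_space)" and "dist (y::'a) z < dist x y"
  shows "dist x z = dist x y"
  using ultrametric_dist_le_max[OF assms(1), of x z y] ultrametric_dist_le_max[OF assms(1), of x y z] assms(2)
  by (auto simp: dist_commute)

lemma ultrametric_ball_eq_iff:
  assumes "ultrametric TYPE('a::metric_space)" and "r > 0"
  shows "ball (x::'a) r = ball y r \<longleftrightarrow> dist x y < r"
proof
  assume "ball x r = ball y r"
  then show "dist x y < r"
    using centre_in_ball[of y r] assms(2) by auto
next
  assume "dist x y < r"
  then have "dist x z < r \<longleftrightarrow> dist y z < r" for z
    using ultrametric_dist_le_max[OF assms(1), of y z x] ultrametric_dist_le_max[OF assms(1), of x z y]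
    by (auto simp: dist_commute)
  then show "ball x r = ball y r"
    by auto
qed

lemma ultrametric_dist_eq_if_near:
  assumes "ultrametric TYPE('a::metric_space)"
    and "dist (x::'a) a < r" "dist x' a' < r" "r \<le> dist x x'"
  shows "dist a a' = dist x x'"
proof -
  have "dist a x' = dist x x'"
    using ultrametric_isosceles[OF assms(1), of x a x'] assms(2,4) by (simp add: dist_commute)
  moreover have "dist a a' = dist a x'"
    using ultrametric_isosceles[OF assms(1), of x' a' a] assms(3,4) calculation by (simp add: dist_commute)
  ultimately show ?thesis by simp
qed

lemma finite_ball_partition:
  assumes "ultrametric TYPE('a::metric_space)" and "compact (UNIV :: 'a set)" and "r > 0"
  shows "finite (ball_partition r :: 'a set set)"
proof -
  obtain k :: "'a set" where "finite k" and k: "UNIV \<subseteq> (\<Union>x\<in>k. ball x r)"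
    using seq_compact_imp_totally_bounded[OF compact_imp_seq_compact[OF assms(2)]] assms(3) by blast
  have "ball_partition r \<subseteq> (\<lambda>x. ball x r) ` k"
  proof
    fix B :: "'a set" assume "B \<in> ball_partition r"
    then obtain x where B: "B = ball x r" by (auto simp: ball_partition_def)
    obtain y where "y \<in> k" "x \<in> ball y r" using k by blast
    then have "ball y r = B"
      using B ultrametric_ball_eq_iff[OF assms(1,3), of y x] by simp
    then show "B \<in> (\<lambda>x. ball x r) ` k"
      using \<open>y \<in> k\<close> by blast
  qed
  then show ?thesis using \<open>finite k\<close> finite_subset by blast
qed

lemma homogeneousD:
  assumes "homogeneous TYPE('a::metric_space)" "finite (A::'a set)" "finite B" "bij_betw f A B"
    "\<forall>x\<in>A. \<forall>y\<in>A. dist (f x) (f y) = dist x y"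
  obtains g where "isometry_of_space g" "\<forall>x\<in>A. g x = f x"
proof -
  have "finite A \<and> finite B \<and> bij_betw f A B \<and> (\<forall>x\<in>A. \<forall>y\<in>A. dist (f x) (f y) = dist x y)"
    using assms(2-5) by blast
  from assms(1)[unfolded homogeneous_def, rule_format, OF this] show ?thesis
    using that by blast
qed

lemma finite_pairwise_dists:
  "finite C \<Longrightarrow> finite {dist x y | x y. x \<in> C \<and> y \<in> C \<and> x \<noteq> y}"
  by (rule finite_subset[of _ "(\<lambda>(x, y). dist x y) ` (C \<times> C)"]) force+

lemma min_dist_le:
  "finite C \<Longrightarrow> x \<in> C \<Longrightarrow> y \<in> C \<Longrightarrow> x \<noteq> y \<Longrightarrow> min_dist C \<le> dist x y"
  unfolding min_dist_def by (rule Min_le) (auto simp: finite_pairwise_dists)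

lemma min_dist_ge:
  assumes "finite C" "x \<in> C" "y \<in> C" "x \<noteq> y"
    and "\<forall>a\<in>C. \<forall>b\<in>C. a \<noteq> b \<longrightarrow> r \<le> dist a b"
  shows "r \<le> min_dist C"
  unfolding min_dist_def using assms
  by (subst Min_ge_iff) (auto simp: finite_pairwise_dists)

lemma min_dist_isometric_image:
  assumes "\<forall>x y. dist (g x) (g y) = dist x y"
  shows "min_dist (g ` C) = min_dist C"
proof -
  have "g x = g y \<longleftrightarrow> x = y" for x y
    using assms by (metis dist_eq_0_iff)
  then have "{dist a b | a b. a \<in> g ` C \<and> b \<in> g ` C \<and> a \<noteq> b} =
      {dist (g x) (g y) | x y. x \<in> C \<and> y \<in> C \<and> x \<noteq> y}"
    by blast
  also have "\<dots> = {dist x y | x y. x \<in> C \<and> y \<in> C \<and> x \<noteq> y}"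
    using assms by simp
  finally show ?thesis
    by (simp add: min_dist_def)
qed

lemma not_isolated_pointD:
  assumes "\<not> isolated_point x" and "e > 0"
  shows "\<exists>y. y \<noteq> x \<and> dist x y < e"
proof -
  have "ball x e \<noteq> {x}"
    using assms by (auto simp: isolated_point_def)
  moreover have "x \<in> ball x e"
    using assms(2) by simp
  ultimately show ?thesis
    by auto
qed

definition ball_transversal :: "real \<Rightarrow> ('a::metric_space) set \<Rightarrow> bool" where
  "ball_transversal r C \<longleftrightarrow> bij_betw (\<lambda>x. ball x r) C (ball_partition r)"

lemma ball_transversal_iff:
  assumes "ultrametric TYPE('a::metric_space)" and "compact (UNIV :: 'a set)" and "r > 0"
  shows "ball_transversal r (C::'a set) \<longleftrightarrow>
    finite C \<and> card C = card (ball_partition r :: 'a set set) \<and>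
    (\<forall>x\<in>C. \<forall>y\<in>C. x \<noteq> y \<longrightarrow> r \<le> dist x y)"
proof -
  have fin: "finite (ball_partition r :: 'a set set)"
    using finite_ball_partition[OF assms] .
  have sub: "(\<lambda>x. ball x r) ` C \<subseteq> ball_partition r"
    unfolding ball_partition_def by blast
  have "ball x r = ball y r \<longleftrightarrow> \<not> r \<le> dist x y" for x y :: 'a
    using ultrametric_ball_eq_iff[OF assms(1,3)] by (simp add: not_le)
  then have inj_iff: "inj_on (\<lambda>x. ball x r) C \<longleftrightarrow> (\<forall>x\<in>C. \<forall>y\<in>C. x \<noteq> y \<longrightarrow> r \<le> dist x y)"
    unfolding inj_on_def by blast
  show ?thesis
  proof
    assume "ball_transversal r C"
    then have inj: "inj_on (\<lambda>x. ball x r) C" and image: "(\<lambda>x. ball x r) ` C = ball_partition r"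
      by (auto simp: ball_transversal_def bij_betw_def)
    have "finite C"
      using fin finite_imageD[OF _ inj] by (simp add: image)
    moreover have "card C = card (ball_partition r :: 'a set set)"
      using card_image[OF inj] by (simp add: image)
    ultimately show "finite C \<and> card C = card (ball_partition r :: 'a set set) \<and>
      (\<forall>x\<in>C. \<forall>y\<in>C. x \<noteq> y \<longrightarrow> r \<le> dist x y)"
      using inj inj_iff by blast
  next
    assume "finite C \<and> card C = card (ball_partition r :: 'a set set) \<and>
      (\<forall>x\<in>C. \<forall>y\<in>C. x \<noteq> y \<longrightarrow> r \<le> dist x y)"
    then have "inj_on (\<lambda>x. ball x r) C" "card ((\<lambda>x. ball x r) ` C) = card (ball_partition r :: 'a set set)"
      using inj_iff by (auto simp: card_image)
    then show "ball_transversal r C"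
      using card_subset_eq[OF fin sub] by (simp add: ball_transversal_def bij_betw_def)
  qed
qed

lemma ex_ball_transversal:
  shows "\<exists>C::'a::metric_space set. ball_transversal r C"
proof -
  let ?b = "\<lambda>x::'a. ball x r"
  have right_inverse: "?b (inv_into UNIV ?b B) = B" if "B \<in> ball_partition r" for B
  proof (rule f_inv_into_f)
    show "B \<in> range ?b"
      using that by (auto simp: ball_partition_def)
  qed
  have "bij_betw ?b (inv_into UNIV ?b ` ball_partition r) (ball_partition r)"
    by (rule bij_betw_byWitness[where f' = "inv_into UNIV ?b"])
      (simp_all add: right_inverse image_subset_iff)
  then show ?thesis
    unfolding ball_transversal_def by blast
qed

lemma ball_transversals_isometric:
  assumes "ultrametric TYPE('a::metric_space)" and "compact (UNIV :: 'a set)" and "r > 0"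
    and "homogeneous TYPE('a)"
    and C: "ball_transversal r (C::'a set)" and C': "ball_transversal r C'"
  shows "\<exists>g. isometry_of_space g \<and> g ` C = C'"
proof -
  let ?b = "\<lambda>x::'a. ball x r"
  define f where "f = inv_into C' ?b \<circ> ?b"
  have b: "bij_betw ?b C (ball_partition r)" "bij_betw ?b C' (ball_partition r)"
    using C C' by (simp_all add: ball_transversal_def)
  have f: "bij_betw f C C'"
    unfolding f_def using bij_betw_trans[OF b(1) bij_betw_inv_into[OF b(2)]] .
  have near: "dist x (f x) < r" if "x \<in> C" for x
  proof -
    have "?b x \<in> ball_partition r"
      by (auto simp: ball_partition_def)
    then have "?b (f x) = ?b x"
      by (simp add: f_def bij_betw_inv_into_right[OF b(2)])
    then show ?thesis
      using ultrametric_ball_eq_iff[OF assms(1,3)] by (simp add: dist_commute)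
  qed
  note C_props = ball_transversal_iff[OF assms(1-3), THEN iffD1, OF C]
    and C'_props = ball_transversal_iff[OF assms(1-3), THEN iffD1, OF C']
  have "dist (f x) (f y) = dist x y" if "x \<in> C" "y \<in> C" for x y
  proof (cases "x = y")
    case False
    then have "r \<le> dist x y"
      using C_props that by blast
    then show ?thesis
      using ultrametric_dist_eq_if_near[OF assms(1) near[OF that(1)] near[OF that(2)]] by simp
  qed simp
  then obtain g where g: "isometry_of_space g" "\<forall>x\<in>C. g x = f x"
    using homogeneousD[OF assms(4) conjunct1[OF C_props] conjunct1[OF C'_props] f] by blast
  have "g ` C = C'"
    using g(2) f by (simp add: bij_betw_def)
  then show ?thesis
    using g(1) by blast
qed

lemma min_dist_less_if_not_ball_transversal:
  assumes "ultrametric TYPE('a::metric_space)" and "compact (UNIV :: 'a set)" and "r > 0"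
    and C0: "ball_transversal r (C0::'a set)"
    and C: "finite (C::'a set)" "card C = card (ball_partition r :: 'a set set)" "\<not> ball_transversal r C"
  shows "min_dist C < min_dist C0"
proof -
  note transversal_iff = ball_transversal_iff[OF assms(1-3)]
  obtain x y where xy: "x \<in> C" "y \<in> C" "x \<noteq> y" "dist x y < r"
    using C transversal_iff[of C] by (auto simp: not_le)
  have C0_props: "finite C0" "card C0 = card C"
      "\<forall>a\<in>C0. \<forall>b\<in>C0. a \<noteq> b \<longrightarrow> r \<le> dist a b"
    using transversal_iff[THEN iffD1, OF C0] C(2) by simp_all
  have "\<not> card C \<le> Suc 0"
    using card_le_Suc0_iff_eq[OF C(1)] xy(1-3) by blast
  then obtain a b where "a \<in> C0" "b \<in> C0" "a \<noteq> b"
    using card_le_Suc0_iff_eq[OF C0_props(1)] C0_props(2) by auto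
  then have "r \<le> min_dist C0"
    using min_dist_ge C0_props by blast
  moreover have "min_dist C \<le> dist x y"
    using min_dist_le[OF C(1) xy(1-3)] .
  ultimately show ?thesis
    using xy(4) by linarith
qed

lemma is_optimal_code_iff_ball_transversal:
  assumes "ultrametric TYPE('a::metric_space)" and "compact (UNIV :: 'a set)" and "r > 0"
    and "homogeneous TYPE('a)"
  shows "is_optimal_code (card (ball_partition r :: 'a set set)) C \<longleftrightarrow> ball_transversal r (C::'a set)"
proof
  assume opt: "is_optimal_code (card (ball_partition r :: 'a set set)) C"
  obtain C0 :: "'a set" where C0: "ball_transversal r C0"
    using ex_ball_transversal by blast
  have "min_dist C0 \<le> min_dist C"
    using opt ball_transversal_iff[OF assms(1-3), THEN iffD1, OF C0] by (simp add: is_optimal_code_def)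
  then show "ball_transversal r C"
    using opt min_dist_less_if_not_ball_transversal[OF assms(1-3) C0, of C]
    by (force simp: is_optimal_code_def)
next
  assume C: "ball_transversal r C"
  have "min_dist C' \<le> min_dist C"
    if "finite C'" "card C' = card (ball_partition r :: 'a set set)" for C' :: "'a set"
  proof (cases "ball_transversal r C'")
    case True
    then obtain g where "isometry_of_space g" "g ` C = C'"
      using ball_transversals_isometric[OF assms C] by blast
    then show ?thesis
      using min_dist_isometric_image[of g C] by (simp add: isometry_of_space_def)
  next
    case False
    then show ?thesis
      using min_dist_less_if_not_ball_transversal[OF assms(1-3) C that] by simp
  qed
  then show "is_optimal_code (card (ball_partition r :: 'a set set)) C"
    using ball_transversal_iff[OF assms(1-3), THEN iffD1, OF C] by (simp add: is_optimal_code_def)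
qed

lemma ultrametric_ex_equidistant_pair:
  assumes "ultrametric TYPE('a::metric_space)" and "\<forall>x::'a. \<not> isolated_point x"
    and "finite (T::'a set)"
  shows "\<exists>y z. y \<noteq> z \<and> y \<notin> T \<and> z \<notin> T \<and> (\<forall>w\<in>T. dist w y = dist w z)"
proof -
  fix x :: 'a
  obtain \<delta> where "\<delta> > 0" and \<delta>: "\<forall>w\<in>T. w \<noteq> x \<longrightarrow> \<delta> \<le> dist x w"
    using finite_set_avoid[OF assms(3)] by blast
  obtain y where "y \<noteq> x" and xy: "dist x y < \<delta>"
    using not_isolated_pointD[OF assms(2)[rule_format] \<open>\<delta> > 0\<close>] by blast
  then obtain z where "z \<noteq> y" and yz: "dist y z < dist x y"
    using not_isolated_pointD[OF assms(2)[rule_format, of y], of "dist x y"] by auto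
  have xz: "dist x z = dist x y"
    using ultrametric_isosceles[OF assms(1) yz] .
  have far: "dist w y = dist w x" "dist w z = dist w x" if "w \<in> T" "w \<noteq> x" for w
  proof -
    have "dist x y < dist w x"
      using \<delta> that xy by (metis dist_commute order_less_le_trans)
    then show "dist w y = dist w x" "dist w z = dist w x"
      using ultrametric_isosceles[OF assms(1), of x y w] ultrametric_isosceles[OF assms(1), of x z w] xz
      by (simp_all add: dist_commute)
  qed
  have "dist w y = dist w z" if "w \<in> T" for w
  proof (cases "w = x")
    case True
    then show ?thesis
      using xz by simp
  next
    case False
    then show ?thesis
      using far[OF that] by simp
  qed
  moreover have "y \<notin> T"
    using \<delta> xy \<open>y \<noteq> x\<close> by (meson not_le)
  moreover have "z \<noteq> x"
    using xz \<open>y \<noteq> x\<close> by (metis dist_eq_0_iff)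
  then have "z \<notin> T"
    using \<delta> xy xz by (metis not_le)
  ultimately show ?thesis
    using \<open>z \<noteq> y\<close> by (intro exI[of _ y] exI[of _ z]) auto
qed

lemma homogeneous_ex_nontrivial_stabiliser:
  assumes "homogeneous TYPE('a::metric_space)" and "finite (T::'a set)"
    and "y \<noteq> z" "y \<notin> T" "z \<notin> T" "\<forall>w\<in>T. dist w y = dist w z"
  shows "\<exists>g. isometry_of_space g \<and> g \<noteq> id \<and> g ` T = T"
proof -
  define A where "A = insert y (insert z T)"
  let ?f = "Transposition.transpose y z"
  have "finite A" "bij_betw ?f A A"
    using assms(2) by (simp_all add: A_def)
  moreover have "\<forall>a\<in>A. \<forall>b\<in>A. dist (?f a) (?f b) = dist a b"
    using assms(3-6) by (auto simp: A_def Transposition.transpose_def dist_commute)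
  ultimately obtain g where g: "isometry_of_space g" "\<forall>a\<in>A. g a = ?f a"
    using homogeneousD[OF assms(1)] by blast
  have "g \<noteq> id"
    using g(2) assms(3) by (auto simp: A_def)
  moreover have "g ` T = T"
    using g(2) assms(4,5) by (force simp: A_def)
  ultimately show ?thesis
    using g(1) by blast
qed

theorem lemma4p18:
  assumes "ultrametric TYPE('a::metric_space)"
    and "compact (UNIV :: 'a set)"
    and "homogeneous TYPE('a)"
    and "\<forall>x::'a. \<not> isolated_point x"
  shows "(\<forall>r>0. (\<exists>C::'a set. is_optimal_code (card (ball_partition r :: 'a set set)) C) \<and>
            (\<forall>C C'::'a set. is_optimal_code (card (ball_partition r :: 'a set set)) C \<and>
                is_optimal_code (card (ball_partition r :: 'a set set)) C' \<longrightarrow>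
                (\<exists>g. isometry_of_space g \<and> g ` C = C')))
         \<and> infinite_symmetry_strength TYPE('a)"
proof (intro conjI allI impI)
  fix r :: real
  assume "r > 0"
  note optimal_iff = is_optimal_code_iff_ball_transversal[OF assms(1,2) \<open>r > 0\<close> assms(3)]
  show "\<exists>C::'a set. is_optimal_code (card (ball_partition r :: 'a set set)) C"
    using ex_ball_transversal optimal_iff by blast
  fix C C' :: "'a set"
  assume "is_optimal_code (card (ball_partition r :: 'a set set)) C \<and>
    is_optimal_code (card (ball_partition r :: 'a set set)) C'"
  then show "\<exists>g. isometry_of_space g \<and> g ` C = C'"
    using ball_transversals_isometric[OF assms(1,2) \<open>r > 0\<close> assms(3)] optimal_iff by blast
next
  have "\<exists>g. isometry_of_space g \<and> g \<noteq> id \<and> g ` T = T" if T: "finite T" for T :: "'a set"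
  proof -
    obtain y z where "y \<noteq> z" "y \<notin> T" "z \<notin> T" "\<forall>w\<in>T. dist w y = dist w z"
      using ultrametric_ex_equidistant_pair[OF assms(1,4) T] by blast
    then show ?thesis
      using homogeneous_ex_nontrivial_stabiliser[OF assms(3) T] by blast
  qed
  then have "sym_admissible TYPE('a) t" for t
    by (simp add: sym_admissible_def)
  then show "infinite_symmetry_strength TYPE('a)"
    by (simp add: infinite_symmetry_strength_def bdd_above_nat)
qed

end
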